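(* Let $L$ be a finite-dimensional completely solvable Lie algebra over any field $F$. Then $\mathrm{nil}(L)\subseteq N(L)$.
   Context: $L$ is completely solvable if $L^2=[L,L]$ is nilpotent. $N(L)$ is the nilradical (largest nilpotent ideal) of $L$. $\langle a,b\rangle$ denotes the Lie subalgebra generated by $a,b$, and $\mathrm{nil}(L)=\{x\in L\mid \langle h,x\rangle \text{ is nilpotent for all } h\in L\}$. *)

theory Defs
  imports Complex_Main
begin

definition lie_algebra :: "('f::field \<Rightarrow> 'v::ab_group_add \<Rightarrow> 'v) \<Rightarrow> ('v \<Rightarrow> 'v \<Rightarrow> 'v) \<Rightarrow> bool" where
  "lie_algebra s br \<longleftrightarrow> vector_space s
     \<and> (\<forall>x. Vector_Spaces.linear s s (br x))
     \<and> (\<forall>y. Vector_Spaces.linear s s (\<lambda>x. br x y))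
     \<and> (\<forall>x. br x x = 0)
     \<and> (\<forall>x y z. br x (br y z) + br y (br z x) + br z (br x y) = 0)"

definition fin_dim :: "('f::field \<Rightarrow> 'v::ab_group_add \<Rightarrow> 'v) \<Rightarrow> bool" where
  "fin_dim s \<longleftrightarrow> (\<exists>B. finite B \<and> module.span s B = UNIV)"

definition lie_bracket_set :: "('f::field \<Rightarrow> 'v::ab_group_add \<Rightarrow> 'v) \<Rightarrow> ('v \<Rightarrow> 'v \<Rightarrow> 'v) \<Rightarrow> 'v set \<Rightarrow> 'v set \<Rightarrow> 'v set" where
  "lie_bracket_set s br A B = module.span s {br a b | a b. a \<in> A \<and> b \<in> B}"

definition lie_subalgebra :: "('f::field \<Rightarrow> 'v::ab_group_add \<Rightarrow> 'v) \<Rightarrow> ('v \<Rightarrow> 'v \<Rightarrow> 'v) \<Rightarrow> 'v set \<Rightarrow> bool" where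
  "lie_subalgebra s br S \<longleftrightarrow> module.subspace s S \<and> (\<forall>x\<in>S. \<forall>y\<in>S. br x y \<in> S)"

definition lie_ideal :: "('f::field \<Rightarrow> 'v::ab_group_add \<Rightarrow> 'v) \<Rightarrow> ('v \<Rightarrow> 'v \<Rightarrow> 'v) \<Rightarrow> 'v set \<Rightarrow> bool" where
  "lie_ideal s br I \<longleftrightarrow> module.subspace s I \<and> (\<forall>x. \<forall>y\<in>I. br x y \<in> I)"

fun lower_central :: "('f::field \<Rightarrow> 'v::ab_group_add \<Rightarrow> 'v) \<Rightarrow> ('v \<Rightarrow> 'v \<Rightarrow> 'v) \<Rightarrow> 'v set \<Rightarrow> nat \<Rightarrow> 'v set" where
  "lower_central s br S 0 = S"
| "lower_central s br S (Suc k) = lie_bracket_set s br S (lower_central s br S k)"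

definition lie_nilpotent :: "('f::field \<Rightarrow> 'v::ab_group_add \<Rightarrow> 'v) \<Rightarrow> ('v \<Rightarrow> 'v \<Rightarrow> 'v) \<Rightarrow> 'v set \<Rightarrow> bool" where
  "lie_nilpotent s br S \<longleftrightarrow> (\<exists>k. lower_central s br S k = {0})"

definition completely_solvable :: "('f::field \<Rightarrow> 'v::ab_group_add \<Rightarrow> 'v) \<Rightarrow> ('v \<Rightarrow> 'v \<Rightarrow> 'v) \<Rightarrow> bool" where
  "completely_solvable s br \<longleftrightarrow> lie_nilpotent s br (lie_bracket_set s br UNIV UNIV)"

definition nilradical :: "('f::field \<Rightarrow> 'v::ab_group_add \<Rightarrow> 'v) \<Rightarrow> ('v \<Rightarrow> 'v \<Rightarrow> 'v) \<Rightarrow> 'v set" where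
  "nilradical s br = (THE N. lie_ideal s br N \<and> lie_nilpotent s br N
      \<and> (\<forall>J. lie_ideal s br J \<and> lie_nilpotent s br J \<longrightarrow> J \<subseteq> N))"

definition lie_generated :: "('f::field \<Rightarrow> 'v::ab_group_add \<Rightarrow> 'v) \<Rightarrow> ('v \<Rightarrow> 'v \<Rightarrow> 'v) \<Rightarrow> 'v set \<Rightarrow> 'v set" where
  "lie_generated s br A = \<Inter>{S. lie_subalgebra s br S \<and> A \<subseteq> S}"

definition nil_set :: "('f::field \<Rightarrow> 'v::ab_group_add \<Rightarrow> 'v) \<Rightarrow> ('v \<Rightarrow> 'v \<Rightarrow> 'v) \<Rightarrow> 'v set" where
  "nil_set s br = {x. \<forall>h. lie_nilpotent s br (lie_generated s br {h, x})}"

end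

theory Submission
  imports Defs
begin

text \<open>Since L is completely solvable, the derived algebra L^2 is a nilpotent ideal. For x in
  nil(L) the map ad x is nilpotent, because ad_x^k h lies in the k-th term of the lower central
  series of the nilpotent algebra generated by h and x. The subspace F x + L^2 is an ideal, as it
  contains all brackets, and it is nilpotent by an Engel-type filtration argument; hence it lies
  in N(L). That N(L) exists at all follows from finite dimensionality and Fitting's theorem: the
  sum of two nilpotent ideals is a nilpotent ideal.\<close>

locale lie_alg = vector_space s for s :: "'f::field \<Rightarrow> 'v::ab_group_add \<Rightarrow> 'v" +
  fixes br :: "'v \<Rightarrow> 'v \<Rightarrow> 'v"
  assumes br_add_right: "br x (y + z) = br x y + br x z"
    and br_scale_right: "br x (s c y) = s c (br x y)"
    and br_add_left: "br (y + z) x = br y x + br z x"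
    and br_scale_left: "br (s c y) x = s c (br y x)"
    and br_self: "br x x = 0"
    and jacobi: "br x (br y z) + br y (br z x) + br z (br x y) = 0"

lemma lie_alg_if_lie_algebra:
  assumes "lie_algebra s br"
  shows "lie_alg s br"
proof -
  have "vector_space s" using assms unfolding lie_algebra_def by blast
  then show ?thesis
    using assms unfolding lie_algebra_def Vector_Spaces.linear_iff
    by unfold_locales (simp_all add: vector_space.vector_space_assms)
qed

context lie_alg
begin

lemma br_zero_right [simp]: "br x 0 = 0"
  using br_add_right[of x 0 0] by simp

lemma br_zero_left [simp]: "br 0 x = 0"
  using br_add_left[of 0 0 x] by simp

lemma br_anticomm: "br x y = - br y x"
proof -
  have "0 = br (x + y) (x + y)" by (rule br_self[symmetric])
  also have "\<dots> = br x x + br x y + (br y x + br y y)"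
    by (simp add: br_add_left br_add_right add.assoc)
  also have "\<dots> = br x y + br y x"
    by (simp add: br_self)
  finally show ?thesis by (simp add: eq_neg_iff_add_eq_0)
qed

lemma br_span_right_mem:
  assumes "b \<in> span B" and "\<And>b. b \<in> B \<Longrightarrow> br a b \<in> T" and "subspace T"
  shows "br a b \<in> T"
proof -
  have "subspace {b. br a b \<in> T}"
    using assms(3) unfolding subspace_def by (auto simp: br_add_right br_scale_right)
  then show ?thesis using span_induct[OF assms(1), of "\<lambda>b. br a b \<in> T"] assms(2) by auto
qed

lemma subspace_lie_bracket_set [simp]: "subspace (lie_bracket_set s br A B)"
  by (simp add: lie_bracket_set_def)

lemma lie_bracket_set_mem: "a \<in> A \<Longrightarrow> b \<in> B \<Longrightarrow> br a b \<in> lie_bracket_set s br A B"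
  unfolding lie_bracket_set_def by (intro span_base) auto

lemma lie_bracket_set_subset:
  assumes "\<And>a b. a \<in> A \<Longrightarrow> b \<in> B \<Longrightarrow> br a b \<in> T" and "subspace T"
  shows "lie_bracket_set s br A B \<subseteq> T"
  unfolding lie_bracket_set_def using assms by (intro span_minimal) auto

lemma lie_ideal_subspace: "lie_ideal s br I \<Longrightarrow> subspace I"
  by (simp add: lie_ideal_def)

lemma lie_ideal_br_mem: "lie_ideal s br I \<Longrightarrow> y \<in> I \<Longrightarrow> br x y \<in> I"
  by (simp add: lie_ideal_def)

lemma lie_ideal_br_mem_left: "lie_ideal s br I \<Longrightarrow> x \<in> I \<Longrightarrow> br x y \<in> I"
  by (metis br_anticomm lie_ideal_def subspace_neg)

lemma lie_ideal_if_derived_subset: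
  assumes "subspace I" and "lie_bracket_set s br UNIV UNIV \<subseteq> I"
  shows "lie_ideal s br I"
  using assms lie_bracket_set_mem[of _ UNIV _ UNIV] unfolding lie_ideal_def by blast

lemma zero_mem_lower_central: "subspace S \<Longrightarrow> 0 \<in> lower_central s br S k"
  by (cases k) (auto simp: lie_bracket_set_def span_zero subspace_def)

lemma lie_nilpotent_if_filtration:
  assumes S: "subspace S" and U: "\<And>t. subspace (U t)" and U0: "S \<subseteq> U 0"
    and step: "\<And>y t z. y \<in> S \<Longrightarrow> z \<in> U t \<Longrightarrow> br y z \<in> U (Suc t)"
    and "U T = {0}"
  shows "lie_nilpotent s br S"
proof -
  have "lower_central s br S k \<subseteq> U k" for k
  proof (induction k)
    case 0
    then show ?case using U0 by simp
  next
    case (Suc k)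
    then show ?case
      by (simp, intro lie_bracket_set_subset U) (auto intro: step)
  qed
  then have "lower_central s br S T = {0}"
    using \<open>U T = {0}\<close> zero_mem_lower_central[OF S, of T] by auto
  then show ?thesis unfolding lie_nilpotent_def by blast
qed

lemma lie_ideal_lower_central:
  assumes J: "lie_ideal s br J"
  shows "lie_ideal s br (lower_central s br J k)"
proof (induction k)
  case 0
  then show ?case using J by simp
next
  case (Suc k)
  let ?C = "lower_central s br J k"
  let ?D = "lower_central s br J (Suc k)"
  have D: "subspace ?D" by simp
  have "br x (br a b) \<in> ?D" if "a \<in> J" "b \<in> ?C" for x a b
  proof -
    have "br x (br a b) = - (br a (br b x) + br b (br x a))"
      using jacobi[of x a b] by (metis add.assoc eq_neg_iff_add_eq_0)
    also have "\<dots> = - br a (br b x) + br (br x a) b"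
      using br_anticomm[of b "br x a"] by simp
    finally have jac: "br x (br a b) = - br a (br b x) + br (br x a) b" .
    have "br a (br b x) \<in> ?D"
      using lie_ideal_br_mem_left[OF Suc \<open>b \<in> ?C\<close>] \<open>a \<in> J\<close> by (simp add: lie_bracket_set_mem)
    moreover have "br (br x a) b \<in> ?D"
      using lie_ideal_br_mem[OF J \<open>a \<in> J\<close>] \<open>b \<in> ?C\<close> by (simp add: lie_bracket_set_mem)
    ultimately show ?thesis unfolding jac by (intro subspace_add[OF D] subspace_neg[OF D])
  qed
  then have "br x y \<in> ?D" if "y \<in> ?D" for x y
    using that D br_span_right_mem[of y "{br a b | a b. a \<in> J \<and> b \<in> ?C}" x ?D]
    by (auto simp: lie_bracket_set_def)
  then show ?case using D unfolding lie_ideal_def by blast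
qed

lemma lower_central_antimono:
  assumes J: "lie_ideal s br J" and "k \<le> k'"
  shows "lower_central s br J k' \<subseteq> lower_central s br J k"
  using \<open>k \<le> k'\<close>
proof (induction k' rule: dec_induct)
  case base
  then show ?case by simp
next
  case (step n)
  have "lower_central s br J (Suc n) \<subseteq> lower_central s br J n"
    using lie_ideal_lower_central[OF J, of n] unfolding lie_ideal_def
    by (simp, intro lie_bracket_set_subset) auto
  then show ?case using step.IH by blast
qed

text \<open>The shifted series with J^0 = L satisfies [J, J^a] \<subseteq> J^(a+1) for every a,
  including a = 0, which the lower central series of J does not.\<close>

definition ideal_power :: "'v set \<Rightarrow> nat \<Rightarrow> 'v set" where
  "ideal_power J a = (case a of 0 \<Rightarrow> UNIV | Suc b \<Rightarrow> lower_central s br J b)"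

lemma lie_ideal_ideal_power: "lie_ideal s br J \<Longrightarrow> lie_ideal s br (ideal_power J a)"
  by (cases a) (simp_all add: ideal_power_def lie_ideal_lower_central, simp add: lie_ideal_def)

lemma br_mem_ideal_power_Suc:
  assumes J: "lie_ideal s br J" and "y \<in> J" and "z \<in> ideal_power J a"
  shows "br y z \<in> ideal_power J (Suc a)"
proof (cases a)
  case 0
  then show ?thesis using lie_ideal_br_mem_left[OF J \<open>y \<in> J\<close>] by (simp add: ideal_power_def)
next
  case (Suc b)
  then show ?thesis using assms by (simp add: ideal_power_def lie_bracket_set_mem)
qed

lemma ideal_power_eq_zero:
  assumes J: "lie_ideal s br J" and c: "lower_central s br J c = {0}" and "c < a"
  shows "ideal_power J a = {0}"
proof -
  obtain b where b: "a = Suc b" "c \<le> b" using \<open>c < a\<close> by (cases a) auto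
  then show ?thesis
    using lower_central_antimono[OF J b(2)] c zero_mem_lower_central[OF lie_ideal_subspace[OF J]]
    by (auto simp: ideal_power_def)
qed

lemma lie_ideal_sum:
  assumes I: "lie_ideal s br I" and J: "lie_ideal s br J"
  shows "lie_ideal s br {x + y | x y. x \<in> I \<and> y \<in> J}"
proof -
  have "br z (x + y) \<in> {x + y | x y. x \<in> I \<and> y \<in> J}" if "x \<in> I" "y \<in> J" for z x y
    using lie_ideal_br_mem[OF I \<open>x \<in> I\<close>] lie_ideal_br_mem[OF J \<open>y \<in> J\<close>]
    by (auto simp: br_add_right)
  then show ?thesis
    using subspace_sums[OF lie_ideal_subspace[OF I] lie_ideal_subspace[OF J]]
    unfolding lie_ideal_def by auto
qed

text \<open>Fitting's theorem. The filtration is spanned by the intersections I^a \<inter> J^b with a + b \<ge> t;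
  bracketing with I raises a and bracketing with J raises b.\<close>

lemma lie_nilpotent_sum:
  assumes I: "lie_ideal s br I" "lie_nilpotent s br I"
    and J: "lie_ideal s br J" "lie_nilpotent s br J"
  shows "lie_nilpotent s br {x + y | x y. x \<in> I \<and> y \<in> J}"
proof -
  obtain ci where ci: "lower_central s br I ci = {0}" using I(2) unfolding lie_nilpotent_def by blast
  obtain cj where cj: "lower_central s br J cj = {0}" using J(2) unfolding lie_nilpotent_def by blast
  define U where "U t = span (\<Union>{ideal_power I a \<inter> ideal_power J b | a b. t \<le> a + b})" for t
  have U_mem: "g \<in> U t" if "g \<in> ideal_power I a" "g \<in> ideal_power J b" "t \<le> a + b" for g a b t
    unfolding U_def using that by (intro span_base) blast
  show ?thesis
  proof (rule lie_nilpotent_if_filtration[where U = U and T = "ci + cj + 1"])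
    show "subspace {x + y | x y. x \<in> I \<and> y \<in> J}"
      using subspace_sums[OF lie_ideal_subspace[OF I(1)] lie_ideal_subspace[OF J(1)]] .
    show "subspace (U t)" for t unfolding U_def by simp
    show "{x + y | x y. x \<in> I \<and> y \<in> J} \<subseteq> U 0"
      using U_mem[of _ 0 0 0] by (auto simp: ideal_power_def)
    show "br y z \<in> U (Suc t)" if y: "y \<in> {x + y | x y. x \<in> I \<and> y \<in> J}" and z: "z \<in> U t"
      for y z t
    proof -
      obtain i j where ij: "y = i + j" "i \<in> I" "j \<in> J" using y by blast
      have step: "br i g \<in> U (Suc t)" "br j g \<in> U (Suc t)"
        if gU: "g \<in> \<Union>{ideal_power I a \<inter> ideal_power J b | a b. t \<le> a + b}" for g
      proof -
        obtain a b where g: "g \<in> ideal_power I a" "g \<in> ideal_power J b" "t \<le> a + b"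
          using gU by blast
        show "br i g \<in> U (Suc t)"
          using br_mem_ideal_power_Suc[OF I(1) ij(2) g(1)] g(3)
            lie_ideal_br_mem[OF lie_ideal_ideal_power[OF J(1)] g(2)] by (intro U_mem) auto
        show "br j g \<in> U (Suc t)"
          using br_mem_ideal_power_Suc[OF J(1) ij(3) g(2)] g(3)
            lie_ideal_br_mem[OF lie_ideal_ideal_power[OF I(1)] g(1)] by (intro U_mem) auto
      qed
      have sU: "subspace (U (Suc t))" unfolding U_def by simp
      have "br i z \<in> U (Suc t)" "br j z \<in> U (Suc t)"
        using br_span_right_mem[OF z[unfolded U_def] step(1) sU]
          br_span_right_mem[OF z[unfolded U_def] step(2) sU] by simp_all
      then show ?thesis unfolding ij(1) br_add_left U_def by (rule span_add)
    qed
    have "\<Union>{ideal_power I a \<inter> ideal_power J b | a b. ci + cj + 1 \<le> a + b} \<subseteq> {0}"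
    proof
      fix g assume "g \<in> \<Union>{ideal_power I a \<inter> ideal_power J b | a b. ci + cj + 1 \<le> a + b}"
      then obtain a b where g: "g \<in> ideal_power I a" "g \<in> ideal_power J b" "ci + cj + 1 \<le> a + b"
        by blast
      have "ci < a \<or> cj < b" using g(3) by arith
      then show "g \<in> {0}"
        using ideal_power_eq_zero[OF I(1) ci, of a] ideal_power_eq_zero[OF J(1) cj, of b] g by blast
    qed
    then show "U (ci + cj + 1) = {0}"
      unfolding U_def using span_minimal[OF _ subspace_single_0] span_zero by blast
  qed
qed

lemma funpow_br_zero [simp]: "(br x ^^ r) 0 = 0"
  by (induction r) auto

lemma funpow_br_add: "(br x ^^ r) (a + b) = (br x ^^ r) a + (br x ^^ r) b"
  by (induction r) (auto simp: br_add_right)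

lemma funpow_br_scale: "(br x ^^ r) (s c a) = s c ((br x ^^ r) a)"
  by (induction r) (auto simp: br_scale_right)

lemma funpow_br_eq_zero_if_le:
  "(\<forall>z. (br x ^^ m) z = 0) \<Longrightarrow> m \<le> r \<Longrightarrow> (br x ^^ r) z = 0"
  using funpow_add[of "r - m" m "br x"] by simp

lemma funpow_br_mem_ideal: "lie_ideal s br K \<Longrightarrow> z \<in> K \<Longrightarrow> (br x ^^ r) z \<in> K"
  by (induction r) (auto simp: lie_ideal_def)

text \<open>The element ad_x^r z with z in C^j(N) gets weight j m + r: bracketing with x raises r,
  bracketing with N raises j, and as ad_x^m = 0 only r < m contributes, so that large weight
  forces large j.\<close>

definition ad_weight_filtration :: "'v \<Rightarrow> nat \<Rightarrow> 'v set \<Rightarrow> nat \<Rightarrow> 'v set" where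
  "ad_weight_filtration x m N t =
     span {(br x ^^ r) z | r j z. z \<in> lower_central s br N j \<and> t \<le> j * m + r}"

lemma ad_weight_filtration_mem:
  "z \<in> lower_central s br N j \<Longrightarrow> t \<le> j * m + r \<Longrightarrow>
    (br x ^^ r) z \<in> ad_weight_filtration x m N t"
  unfolding ad_weight_filtration_def by (intro span_base) blast

lemma ideal_subset_ad_weight_filtration: "N \<subseteq> ad_weight_filtration x m N 0"
  using ad_weight_filtration_mem[of _ N 0 0 m 0 x] by auto

lemma br_mem_ad_weight_filtration:
  assumes N: "lie_ideal s br N" and m: "\<forall>z. (br x ^^ m) z = 0"
    and y: "y \<in> span {x} \<or> y \<in> N" and z: "z \<in> ad_weight_filtration x m N t"
  shows "br y z \<in> ad_weight_filtration x m N (Suc t)"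
proof (rule br_span_right_mem[OF z[unfolded ad_weight_filtration_def]])
  show "subspace (ad_weight_filtration x m N (Suc t))"
    by (simp add: ad_weight_filtration_def)
  fix g assume "g \<in> {(br x ^^ r) z | r j z. z \<in> lower_central s br N j \<and> t \<le> j * m + r}"
  then obtain r j z0 where g: "g = (br x ^^ r) z0" "z0 \<in> lower_central s br N j" "t \<le> j * m + r"
    by blast
  show "br y g \<in> ad_weight_filtration x m N (Suc t)"
    using y
  proof
    assume "y \<in> span {x}"
    then obtain c where "y = s c x" using span_singleton by auto
    moreover have "br x g \<in> ad_weight_filtration x m N (Suc t)"
      using ad_weight_filtration_mem[OF g(2), of "Suc t" m "Suc r" x] g by simp
    ultimately show ?thesis
      by (simp add: br_scale_left ad_weight_filtration_def span_scale)
  next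
    assume "y \<in> N"
    show ?thesis
    proof (cases "m \<le> r")
      case True
      then show ?thesis
        using g(1) funpow_br_eq_zero_if_le[OF m] by (simp add: ad_weight_filtration_def span_zero)
    next
      case False
      have "g \<in> lower_central s br N j"
        using g funpow_br_mem_ideal[OF lie_ideal_lower_central[OF N]] by simp
      then have "br y g \<in> lower_central s br N (Suc j)"
        using \<open>y \<in> N\<close> by (simp add: lie_bracket_set_mem)
      moreover have "Suc t \<le> Suc j * m + 0" using g(3) False by simp
      ultimately show ?thesis using ad_weight_filtration_mem[of "br y g" N "Suc j" "Suc t" m 0 x]
        by simp
    qed
  qed
qed

lemma ad_weight_filtration_eq_zero:
  assumes N: "lie_ideal s br N" and m: "\<forall>z. (br x ^^ m) z = 0"
    and c: "lower_central s br N c = {0}"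
  shows "ad_weight_filtration x m N (c * m) = {0}"
proof -
  have "{(br x ^^ r) z | r j z. z \<in> lower_central s br N j \<and> c * m \<le> j * m + r} \<subseteq> {0}"
  proof
    fix g assume "g \<in> {(br x ^^ r) z | r j z. z \<in> lower_central s br N j \<and> c * m \<le> j * m + r}"
    then obtain r j z0 where g: "g = (br x ^^ r) z0" "z0 \<in> lower_central s br N j"
        "c * m \<le> j * m + r"
      by blast
    show "g \<in> {0}"
    proof (cases "m \<le> r")
      case True
      then show ?thesis using g(1) funpow_br_eq_zero_if_le[OF m] by simp
    next
      case False
      have "c \<le> j"
      proof (rule ccontr)
        assume "\<not> c \<le> j"
        then have "Suc j * m \<le> c * m" by (intro mult_le_mono1) simp
        then show False using g(3) False by simp
      qed
      then have "z0 = 0" using lower_central_antimono[OF N \<open>c \<le> j\<close>] c g(2) by auto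
      then show ?thesis using g(1) by simp
    qed
  qed
  then show ?thesis
    unfolding ad_weight_filtration_def using span_minimal[OF _ subspace_single_0] span_zero by blast
qed

lemma br_mem_ideal_if_mem_span_plus_ideal:
  assumes N: "lie_ideal s br N"
    and "y \<in> {a + n | a n. a \<in> span {x} \<and> n \<in> N}" "z \<in> {a + n | a n. a \<in> span {x} \<and> n \<in> N}"
  shows "br y z \<in> N"
proof -
  obtain c n where y: "y = s c x + n" "n \<in> N" using assms(2) span_singleton by auto
  obtain d n' where z: "z = s d x + n'" "n' \<in> N" using assms(3) span_singleton by auto
  have "br x z = br x n'"
    unfolding z(1) by (simp add: br_add_right br_scale_right br_self)
  then have "br y z = s c (br x n') + br n z"
    unfolding y(1) by (simp add: br_add_left br_scale_left)
  then show ?thesis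
    using lie_ideal_br_mem[OF N z(2)] lie_ideal_br_mem_left[OF N y(2)] lie_ideal_subspace[OF N]
    by (simp add: subspace_add subspace_scale)
qed

lemma lie_nilpotent_span_plus_ideal:
  assumes N: "lie_ideal s br N" "lie_nilpotent s br N" and m: "\<forall>z. (br x ^^ m) z = 0"
  shows "lie_nilpotent s br {a + n | a n. a \<in> span {x} \<and> n \<in> N}"
proof -
  let ?S = "{a + n | a n. a \<in> span {x} \<and> n \<in> N}"
  let ?V = "ad_weight_filtration x m N"
  obtain c where c: "lower_central s br N c = {0}" using N(2) unfolding lie_nilpotent_def by blast
  define U where "U t = (case t of 0 \<Rightarrow> ?S | Suc t' \<Rightarrow> ?V t')" for t
  show ?thesis
  proof (rule lie_nilpotent_if_filtration[where U = U and T = "Suc (c * m)"])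
    show sS: "subspace ?S"
      by (rule subspace_sums) (simp_all add: lie_ideal_subspace[OF N(1)])
    show "subspace (U t)" for t
      using sS by (cases t) (simp_all add: U_def ad_weight_filtration_def)
    show "?S \<subseteq> U 0" by (simp add: U_def)
    show "br y z \<in> U (Suc t)" if y: "y \<in> ?S" and z: "z \<in> U t" for y z t
    proof (cases t)
      case 0
      then have "z \<in> ?S" using z by (simp add: U_def)
      then have "br y z \<in> N" by (rule br_mem_ideal_if_mem_span_plus_ideal[OF N(1) y])
      then show ?thesis using 0 ideal_subset_ad_weight_filtration[of N x m] by (auto simp: U_def)
    next
      case (Suc t')
      obtain a n where "y = a + n" "a \<in> span {x}" "n \<in> N" using y by blast
      moreover have "subspace (?V t)" by (simp add: ad_weight_filtration_def)
      ultimately show ?thesis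
        using z br_mem_ad_weight_filtration[OF N(1) m, where t = t'] Suc
        by (simp add: U_def br_add_left subspace_add)
    qed
    show "U (Suc (c * m)) = {0}"
      using ad_weight_filtration_eq_zero[OF N(1) m c] by (simp add: U_def)
  qed
qed

end

locale fin_dim_lie_alg = lie_alg s br + finite_dimensional_vector_space s Bs
  for s :: "'f::field \<Rightarrow> 'v::ab_group_add \<Rightarrow> 'v" and br and Bs

lemma fin_dim_lie_alg_if_fin_dim:
  assumes "lie_alg s br" and "fin_dim s"
  obtains Bs where "fin_dim_lie_alg s br Bs"
proof -
  interpret lie_alg s br by (rule assms(1))
  obtain B where B: "finite B" "span B = UNIV" using assms(2) unfolding fin_dim_def by blast
  obtain B' where B': "B' \<subseteq> B" "independent B'" "B \<subseteq> span B'"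
    using maximal_independent_subset[of B] by blast
  have "span B' = UNIV" using B(2) span_mono[OF B'(3)] span_span[of B'] by (simp add: top_le)
  then have "fin_dim_lie_alg s br B'"
    using B'(2) finite_subset[OF B'(1) B(1)] by unfold_locales auto
  then show thesis by (rule that)
qed

context fin_dim_lie_alg
begin

lemma nilpotent_ideal_subset_nilradical:
  assumes "lie_ideal s br J" and "lie_nilpotent s br J"
  shows "J \<subseteq> nilradical s br"
proof -
  let ?P = "\<lambda>J. lie_ideal s br J \<and> lie_nilpotent s br J"
  have P0: "?P {0}"
    unfolding lie_ideal_def lie_nilpotent_def by (auto simp: subspace_def intro: exI[of _ 0])
  have "\<forall>y. ?P y \<longrightarrow> dim y < Suc dimension" using dim_subset_UNIV by (simp add: le_imp_less_Suc)
  then obtain N where N: "?P N" and max: "\<And>y. ?P y \<Longrightarrow> dim y \<le> dim N"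
    using ex_has_greatest_nat[of ?P "{0}" dim "Suc dimension", OF P0] by blast
  have greatest: "J \<subseteq> N" if J: "?P J" for J
  proof -
    let ?S = "{x + y | x y. x \<in> J \<and> y \<in> N}"
    have sJ: "subspace J" and sN: "subspace N" using J N lie_ideal_subspace by auto
    have "N \<subseteq> ?S" "J \<subseteq> ?S" using subspace_0[OF sJ] subspace_0[OF sN] by force+
    moreover have "dim ?S \<le> dim N" using lie_ideal_sum lie_nilpotent_sum J N max by blast
    ultimately show ?thesis using subspace_dim_equal[OF sN subspace_sums[OF sJ sN]] by auto
  qed
  have "nilradical s br = N"
    unfolding nilradical_def using N greatest by (intro the_equality) blast+
  then show ?thesis using greatest assms by blast
qed

lemma ad_nilpotent_if_mem_nil_set:
  assumes x: "x \<in> nil_set s br"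
  obtains m where "\<forall>z. (br x ^^ m) z = 0"
proof -
  have "\<exists>k. (br x ^^ k) h = 0" for h
  proof -
    let ?S = "lie_generated s br {h, x}"
    have "h \<in> ?S" "x \<in> ?S" unfolding lie_generated_def by auto
    then have "(br x ^^ k) h \<in> lower_central s br ?S k" for k
      by (induction k) (auto intro: lie_bracket_set_mem)
    moreover obtain k where "lower_central s br ?S k = {0}"
      using x unfolding nil_set_def lie_nilpotent_def by blast
    ultimately show ?thesis by blast
  qed
  then obtain f where f: "\<And>h. (br x ^^ f h) h = 0" by metis
  define m where "m = (\<Sum>b\<in>Bs. f b)"
  have "Bs \<subseteq> {z. (br x ^^ m) z = 0}"
  proof
    fix b assume "b \<in> Bs"
    then have "f b \<le> m" unfolding m_def using finite_Basis by (intro member_le_sum) auto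
    then have "(br x ^^ m) b = (br x ^^ (m - f b)) ((br x ^^ f b) b)"
      by (metis funpow_add comp_apply le_add_diff_inverse2)
    then show "b \<in> {z. (br x ^^ m) z = 0}" using f[of b] by simp
  qed
  moreover have "subspace {z. (br x ^^ m) z = 0}"
    unfolding subspace_def by (auto simp: funpow_br_add funpow_br_scale)
  ultimately have "span Bs \<subseteq> {z. (br x ^^ m) z = 0}" by (intro span_minimal)
  then show thesis using that span_Basis by auto
qed

end

theorem lemma3p5:
  fixes s :: "'f::field \<Rightarrow> 'v::ab_group_add \<Rightarrow> 'v" and br :: "'v \<Rightarrow> 'v \<Rightarrow> 'v"
  assumes "lie_algebra s br" and "fin_dim s" and "completely_solvable s br"
  shows "nil_set s br \<subseteq> nilradical s br"
proof
  fix x assume x: "x \<in> nil_set s br"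
  obtain Bs where "fin_dim_lie_alg s br Bs"
    using fin_dim_lie_alg_if_fin_dim[OF lie_alg_if_lie_algebra[OF assms(1)] assms(2)] .
  then interpret fin_dim_lie_alg s br Bs .
  let ?L2 = "lie_bracket_set s br UNIV UNIV"
  let ?I = "{a + n | a n. a \<in> span {x} \<and> n \<in> ?L2}"
  have L2: "lie_ideal s br ?L2" "lie_nilpotent s br ?L2"
    using assms(3) lie_ideal_if_derived_subset[of ?L2] unfolding completely_solvable_def by auto
  obtain m where "\<forall>z. (br x ^^ m) z = 0" using ad_nilpotent_if_mem_nil_set[OF x] .
  then have "lie_nilpotent s br ?I" by (rule lie_nilpotent_span_plus_ideal[OF L2])
  moreover have "subspace ?I" by (rule subspace_sums) simp_all
  then have "lie_ideal s br ?I"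
    by (rule lie_ideal_if_derived_subset) (force intro: span_zero)
  moreover have "x \<in> ?I" using subspace_0[OF subspace_lie_bracket_set] span_base[of x "{x}"] by force
  ultimately show "x \<in> nilradical s br" using nilpotent_ideal_subset_nilradical by blast
qed

end
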